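(* Let $\mathbf{x}\in\mathbb{C}^d$ be an arbitrary fixed vector and $\mathbf{b}=(b_1,\ldots,b_m)^\top\in\mathbb{C}^m$ a vector satisfying $\|\mathbf{b}\|_2\lesssim\sqrt{m}\,\|\mathbf{x}\|_2$. Let $\mathbf{a}_1,\ldots,\mathbf{a}_m\in\mathbb{C}^d$ be i.i.d. complex Gaussian random vectors and $y_j=|\mathbf{a}_j^*\mathbf{x}+b_j|^2$, $j=1,\ldots,m$. Then there is a universal constant $c>0$ such that with probability at least $1-4\exp(-cm)$, \[ R_0/3\le\|\mathbf{x}\|_2\le R_0,\qquad\text{where } R_0:=2\Big(\frac1m\sum_{j=1}^m y_j-\frac{\|\mathbf{b}\|_2^2}{m}\Big)^{1/2}. \]
   Context: A complex Gaussian random vector $\mathbf{a}\in\mathbb{C}^d$ means $\mathbf{a}\sim\frac{1}{\sqrt2}\mathcal{N}(0,I_d)+\frac{i}{\sqrt2}\mathcal{N}(0,I_d)$. $A\lesssim B$ means $A\le C_0B$ for an absolute constant $C_0>0$. *)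

theory Defs
  imports "HOL-Probability.Probability"
begin

text \<open>Vectors in C^d are represented as functions nat => complex, only indices < d matter.\<close>

definition std_gaussian :: "real measure" where
  "std_gaussian = density lborel std_normal_density"

definition real_gaussian_vector :: "nat \<Rightarrow> (nat \<Rightarrow> real) measure" where
  "real_gaussian_vector d = PiM {..<d} (\<lambda>_. std_gaussian)"

definition complex_gaussian_vector :: "nat \<Rightarrow> (nat \<Rightarrow> complex) measure" where
  "complex_gaussian_vector d =
     distr (real_gaussian_vector d \<Otimes>\<^sub>M real_gaussian_vector d) (PiM {..<d} (\<lambda>_. borel))
       (\<lambda>(u, v). \<lambda>k\<in>{..<d}. Complex (u k / sqrt 2) (v k / sqrt 2))"

definition gaussian_sample :: "nat \<Rightarrow> nat \<Rightarrow> (nat \<Rightarrow> nat \<Rightarrow> complex) measure" where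
  "gaussian_sample d m = PiM {..<m} (\<lambda>_. complex_gaussian_vector d)"

definition cnorm2 :: "nat \<Rightarrow> (nat \<Rightarrow> complex) \<Rightarrow> real" where
  "cnorm2 n v = sqrt (\<Sum>k<n. (cmod (v k))\<^sup>2)"

definition cinner :: "nat \<Rightarrow> (nat \<Rightarrow> complex) \<Rightarrow> (nat \<Rightarrow> complex) \<Rightarrow> complex" where
  "cinner d a x = (\<Sum>k<d. cnj (a k) * x k)"

definition R0 :: "nat \<Rightarrow> nat \<Rightarrow> (nat \<Rightarrow> complex) \<Rightarrow> (nat \<Rightarrow> complex) \<Rightarrow> (nat \<Rightarrow> nat \<Rightarrow> complex) \<Rightarrow> real" where
  "R0 d m x b a = 2 * sqrt ((1 / real m) * (\<Sum>j<m. (cmod (cinner d (a j) x + b j))\<^sup>2)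
                            - (cnorm2 m b)\<^sup>2 / real m)"

end

theory Submission
  imports Defs
begin

text \<open>
  Put \<open>S = (\<Sum>j<m. \<bar>a\<^sub>j\<^sup>* x + b\<^sub>j\<bar>\<^sup>2 - \<bar>b\<^sub>j\<bar>\<^sup>2)\<close>, so that \<open>R\<^sub>0 = 2 sqrt (S / m)\<close> and \<open>E S = m \<parallel>x\<parallel>\<^sup>2\<close>.
  The claimed bounds fail only if \<open>S \<le> m \<parallel>x\<parallel>\<^sup>2 / 4\<close> or \<open>S \<ge> 9 m \<parallel>x\<parallel>\<^sup>2 / 4\<close>, and both tails are
  handled by Chernoff's inequality. The real and imaginary parts of \<open>a\<^sup>* x\<close> are centred
  Gaussians of variance \<open>\<parallel>x\<parallel>\<^sup>2 / 2\<close>, and for such a Gaussian \<open>X\<close> the moment generating function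
  of \<open>(X + \<beta>)\<^sup>2 - \<beta>\<^sup>2\<close> is explicit (complete the square); for \<open>\<bar>2 s \<sigma>\<^sup>2\<bar> \<le> 1/2\<close> it is at most
  \<open>exp (s \<sigma>\<^sup>2 + 4 s\<^sup>2 \<sigma>\<^sup>4 + 4 s\<^sup>2 \<sigma>\<^sup>2 \<beta>\<^sup>2)\<close>. Independence over \<open>j\<close> multiplies these bounds, and with
  \<open>\<parallel>b\<parallel>\<^sup>2 \<le> C\<^sub>0\<^sup>2 m \<parallel>x\<parallel>\<^sup>2\<close> the choice \<open>s = \<plusminus>1 / (2 K \<parallel>x\<parallel>\<^sup>2)\<close>, \<open>K = 4 + 8 C\<^sub>0\<^sup>2\<close>, bounds each tail
  by \<open>exp (- m / (8 K))\<close>.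
\<close>

lemma prob_space_std_gaussian: "prob_space std_gaussian"
  unfolding std_gaussian_def using prob_space_normal_density by simp

lemma sets_std_gaussian [simp, measurable_cong]: "sets std_gaussian = sets borel"
  by (simp add: std_gaussian_def)

lemma nn_integral_std_gaussian_exp_shifted_square:
  fixes s w \<beta> :: real
  assumes "2 * s * w\<^sup>2 < 1"
  shows "(\<integral>\<^sup>+z. ennreal (exp (s * ((w * z + \<beta>)\<^sup>2 - \<beta>\<^sup>2))) \<partial>std_gaussian)
     = ennreal (exp (2 * s\<^sup>2 * w\<^sup>2 * \<beta>\<^sup>2 / (1 - 2 * s * w\<^sup>2)) / sqrt (1 - 2 * s * w\<^sup>2))"
proof -
  define a where "a = 1 - 2 * s * w\<^sup>2"
  have a: "a > 0" using assms by (simp add: a_def)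
  define \<mu> where "\<mu> = 2 * s * w * \<beta> / a"
  define C where "C = exp (2 * s\<^sup>2 * w\<^sup>2 * \<beta>\<^sup>2 / a) / sqrt a"
  \<comment> \<open>Completing the square turns the weighted Gaussian density into C times the density of N(\<mu>, 1/a).\<close>
  have density: "std_normal_density z * exp (s * ((w * z + \<beta>)\<^sup>2 - \<beta>\<^sup>2))
      = C * normal_density \<mu> (1 / sqrt a) z" for z
  proof -
    have "a * (z - \<mu>)\<^sup>2 = a * z\<^sup>2 - 4 * s * w * \<beta> * z + (2 * s * w * \<beta>)\<^sup>2 / a"
      using a by (simp add: \<mu>_def field_simps power2_eq_square)
    then have square: "- z\<^sup>2 / 2 + s * ((w * z + \<beta>)\<^sup>2 - \<beta>\<^sup>2)
        = 2 * s\<^sup>2 * w\<^sup>2 * \<beta>\<^sup>2 / a - (z - \<mu>)\<^sup>2 / (2 * (1 / sqrt a)\<^sup>2)"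
      using a by (simp add: a_def field_simps power2_eq_square)
    have "std_normal_density z * exp (s * ((w * z + \<beta>)\<^sup>2 - \<beta>\<^sup>2))
       = 1 / sqrt (2 * pi) * exp (- z\<^sup>2 / 2 + s * ((w * z + \<beta>)\<^sup>2 - \<beta>\<^sup>2))"
      by (simp add: std_normal_density_def exp_add[symmetric])
    also have "\<dots> = C * normal_density \<mu> (1 / sqrt a) z"
      unfolding square normal_density_def C_def exp_diff
      using a by (simp add: real_sqrt_divide exp_minus_inverse field_simps)
    finally show ?thesis .
  qed
  have "(\<integral>\<^sup>+z. ennreal (exp (s * ((w * z + \<beta>)\<^sup>2 - \<beta>\<^sup>2))) \<partial>std_gaussian)
      = (\<integral>\<^sup>+z. ennreal C * ennreal (normal_density \<mu> (1 / sqrt a) z) \<partial>lborel)"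
    unfolding std_gaussian_def using a
    by (subst nn_integral_density) (auto simp: ennreal_mult[symmetric] density C_def intro!: nn_integral_cong)
  also have "\<dots> = ennreal C"
    using a by (subst nn_integral_cmult)
      (auto simp: nn_integral_eq_integral)
  finally show ?thesis by (simp add: C_def a_def)
qed

text \<open>\<open>gaussian_law M X \<sigma>\<close>: under \<open>M\<close>, \<open>X\<close> has the law of \<open>\<sigma> Z\<close> for a standard Gaussian \<open>Z\<close>.
  Phrased through nonnegative integrals so that \<open>\<sigma> = 0\<close> and \<open>\<sigma> < 0\<close> need no special treatment.\<close>

definition gaussian_law :: "'a measure \<Rightarrow> ('a \<Rightarrow> real) \<Rightarrow> real \<Rightarrow> bool" where
  "gaussian_law M X \<sigma> \<longleftrightarrow> (\<forall>g \<in> borel_measurable borel.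
      (\<integral>\<^sup>+\<omega>. g (X \<omega>) \<partial>M) = (\<integral>\<^sup>+z. g (\<sigma> * z) \<partial>std_gaussian))"

lemma gaussian_lawD:
  "gaussian_law M X \<sigma> \<Longrightarrow> g \<in> borel_measurable borel \<Longrightarrow>
    (\<integral>\<^sup>+\<omega>. g (X \<omega>) \<partial>M) = (\<integral>\<^sup>+z. g (\<sigma> * z) \<partial>std_gaussian)"
  unfolding gaussian_law_def by blast

lemma gaussian_law_cong:
  "gaussian_law M X \<sigma> \<Longrightarrow> (\<And>\<omega>. \<omega> \<in> space M \<Longrightarrow> X \<omega> = Y \<omega>) \<Longrightarrow> \<sigma> = \<tau> \<Longrightarrow> gaussian_law M Y \<tau>"
  unfolding gaussian_law_def by (metis (no_types, lifting) nn_integral_cong)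

lemma gaussian_law_distr:
  assumes [measurable]: "f \<in> measurable M N" "X \<in> borel_measurable N"
  shows "gaussian_law (distr M N f) X \<sigma> \<longleftrightarrow> gaussian_law M (\<lambda>\<omega>. X (f \<omega>)) \<sigma>"
  unfolding gaussian_law_def by (simp add: nn_integral_distr)

lemma gaussian_law_zero:
  assumes "prob_space M"
  shows "gaussian_law M (\<lambda>_. 0) 0"
proof -
  interpret M: prob_space M by fact
  interpret G: prob_space std_gaussian by (rule prob_space_std_gaussian)
  show ?thesis
    by (simp add: gaussian_law_def M.emeasure_space_1 G.emeasure_space_1[simplified])
qed

lemma gaussian_law_normal_density:
  assumes X: "distributed M lborel X (normal_density 0 \<sigma>)" and \<sigma>: "\<sigma> > 0"
  shows "gaussian_law M X \<sigma>"
  unfolding gaussian_law_def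
proof
  fix g :: "real \<Rightarrow> ennreal" assume [measurable]: "g \<in> borel_measurable borel"
  have "(\<integral>\<^sup>+\<omega>. g (X \<omega>) \<partial>M) = (\<integral>\<^sup>+w. ennreal (normal_density 0 \<sigma> w) * g w \<partial>lborel)"
    using distributed_nn_integral[OF X, of g] by simp
  also have "\<dots> = ennreal \<bar>\<sigma>\<bar> * (\<integral>\<^sup>+z. ennreal (normal_density 0 \<sigma> (0 + \<sigma> * z)) * g (0 + \<sigma> * z) \<partial>lborel)"
    by (rule nn_integral_real_affine) (use \<sigma> in auto)
  also have "\<dots> = (\<integral>\<^sup>+z. ennreal (\<sigma> * normal_density 0 \<sigma> (\<sigma> * z)) * g (\<sigma> * z) \<partial>lborel)"
    using \<sigma> by (subst nn_integral_cmult[symmetric]) (auto simp: ennreal_mult' mult.assoc)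
  also have "\<dots> = (\<integral>\<^sup>+z. ennreal (std_normal_density z) * g (\<sigma> * z) \<partial>lborel)"
  proof (rule nn_integral_cong)
    fix z
    have "\<sigma> * normal_density 0 \<sigma> (\<sigma> * z) = std_normal_density z"
      using \<sigma> unfolding normal_density_def by (simp add: real_sqrt_mult field_simps)
    then show "ennreal (\<sigma> * normal_density 0 \<sigma> (\<sigma> * z)) * g (\<sigma> * z) = ennreal (std_normal_density z) * g (\<sigma> * z)"
      by simp
  qed
  also have "\<dots> = (\<integral>\<^sup>+z. g (\<sigma> * z) \<partial>std_gaussian)"
    unfolding std_gaussian_def by (subst nn_integral_density) auto
  finally show "(\<integral>\<^sup>+\<omega>. g (X \<omega>) \<partial>M) = (\<integral>\<^sup>+z. g (\<sigma> * z) \<partial>std_gaussian)" .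
qed

lemma ln_one_minus_ge:
  fixes t :: real
  assumes "\<bar>t\<bar> \<le> 1/2"
  shows "- t - 2 * t\<^sup>2 \<le> ln (1 - t)"
proof (cases "t \<ge> 0")
  case True
  then show ?thesis using assms ln_one_minus_pos_lower_bound[of t] by simp
next
  case False
  then have "- t - t\<^sup>2 \<le> ln (1 - t)"
    using assms ln_one_plus_pos_lower_bound[of "- t"] by (simp add: power2_eq_square)
  moreover have "0 \<le> t\<^sup>2" by simp
  ultimately show ?thesis by linarith
qed

lemma inverse_sqrt_one_minus_le:
  fixes t :: real
  assumes "\<bar>t\<bar> \<le> 1/2"
  shows "1 / sqrt (1 - t) \<le> exp (t / 2 + t\<^sup>2)"
proof -
  have "sqrt (1 - t) = exp (ln (1 - t) / 2)"
    using assms by (simp add: powr_half_sqrt[symmetric] powr_def)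
  with ln_one_minus_ge[OF assms] show ?thesis
    by (simp add: exp_minus_inverse[symmetric] exp_minus[symmetric] inverse_eq_divide[symmetric])
qed

lemma nn_integral_exp_shifted_square_le:
  fixes s \<sigma> \<beta> :: real
  assumes X: "gaussian_law M X \<sigma>" and s: "\<bar>2 * s * \<sigma>\<^sup>2\<bar> \<le> 1/2"
  shows "(\<integral>\<^sup>+\<omega>. ennreal (exp (s * ((X \<omega> + \<beta>)\<^sup>2 - \<beta>\<^sup>2))) \<partial>M)
     \<le> ennreal (exp (s * \<sigma>\<^sup>2 + 4 * s\<^sup>2 * \<sigma>^4 + 4 * s\<^sup>2 * \<sigma>\<^sup>2 * \<beta>\<^sup>2))"
proof -
  define t where "t = 2 * s * \<sigma>\<^sup>2"
  have t: "\<bar>t\<bar> \<le> 1/2" using s by (simp add: t_def)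
  have "(\<integral>\<^sup>+\<omega>. ennreal (exp (s * ((X \<omega> + \<beta>)\<^sup>2 - \<beta>\<^sup>2))) \<partial>M)
     = ennreal (exp (2 * s\<^sup>2 * \<sigma>\<^sup>2 * \<beta>\<^sup>2 / (1 - t)) * (1 / sqrt (1 - t)))"
    using gaussian_lawD[OF X, of "\<lambda>x. ennreal (exp (s * ((x + \<beta>)\<^sup>2 - \<beta>\<^sup>2)))"] t
    by (simp add: nn_integral_std_gaussian_exp_shifted_square t_def)
  also have "\<dots> \<le> ennreal (exp (4 * s\<^sup>2 * \<sigma>\<^sup>2 * \<beta>\<^sup>2) * exp (t / 2 + t\<^sup>2))"
  proof (intro ennreal_leI mult_mono inverse_sqrt_one_minus_le t)
    have "2 * (s\<^sup>2 * \<sigma>\<^sup>2 * \<beta>\<^sup>2) / (1 - t) \<le> 2 * (s\<^sup>2 * \<sigma>\<^sup>2 * \<beta>\<^sup>2) / (1/2)"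
      using t by (intro divide_left_mono) auto
    then show "exp (2 * s\<^sup>2 * \<sigma>\<^sup>2 * \<beta>\<^sup>2 / (1 - t)) \<le> exp (4 * s\<^sup>2 * \<sigma>\<^sup>2 * \<beta>\<^sup>2)"
      by (simp add: mult.assoc)
  qed (use t in auto)
  also have "\<dots> = ennreal (exp (s * \<sigma>\<^sup>2 + 4 * s\<^sup>2 * \<sigma>^4 + 4 * s\<^sup>2 * \<sigma>\<^sup>2 * \<beta>\<^sup>2))"
    by (simp add: t_def exp_add[symmetric] power2_eq_square eval_nat_numeral algebra_simps)
  finally show ?thesis .
qed

lemma (in prob_space) distr_pair_snd:
  assumes "sigma_finite_measure N"
  shows "distr (M \<Otimes>\<^sub>M N) N snd = N"
proof (intro measure_eqI)
  interpret N: sigma_finite_measure N by fact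
  fix A assume A: "A \<in> sets (distr (M \<Otimes>\<^sub>M N) N snd)"
  then have "emeasure (distr (M \<Otimes>\<^sub>M N) N snd) A = emeasure (M \<Otimes>\<^sub>M N) (space M \<times> A)"
    by (auto simp: emeasure_distr space_pair_measure dest: sets.sets_into_space
        intro!: arg_cong2[where f=emeasure])
  with A show "emeasure (distr (M \<Otimes>\<^sub>M N) N snd) A = emeasure N A"
    by (simp add: N.emeasure_pair_measure_Times emeasure_space_1)
qed simp

lemma indep_var_fst_snd:
  assumes "prob_space M" "prob_space N"
  shows "prob_space.indep_var (M \<Otimes>\<^sub>M N) M fst N snd"
proof -
  interpret pair_prob_space M N
    using assms by (simp add: pair_prob_space_def pair_sigma_finite_def prob_space_imp_sigma_finite)
  have "distr (M \<Otimes>\<^sub>M N) (M \<Otimes>\<^sub>M N) (\<lambda>p. (fst p, snd p)) = M \<Otimes>\<^sub>M N"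
    by (simp add: distr_id2)
  then show ?thesis
    by (simp add: P.indep_var_distribution_eq M2.distr_pair_fst
        M1.distr_pair_snd[OF M2.sigma_finite_measure_axioms])
qed

lemma pair_prob_space_std_gaussian: "pair_prob_space std_gaussian std_gaussian"
  by (simp add: pair_prob_space_def pair_sigma_finite_def prob_space_std_gaussian prob_space_imp_sigma_finite)

lemma distributed_std_gaussian_pair_fst:
  "distributed (std_gaussian \<Otimes>\<^sub>M std_gaussian) lborel fst std_normal_density"
proof -
  have "distr (std_gaussian \<Otimes>\<^sub>M std_gaussian) lborel fst = std_gaussian"
    using distr_cong[of "std_gaussian \<Otimes>\<^sub>M std_gaussian" _ lborel std_gaussian fst fst]
      prob_space.distr_pair_fst[OF prob_space_std_gaussian] by simp
  then show ?thesis
    by (simp add: distributed_def std_gaussian_def)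
qed

lemma distributed_std_gaussian_pair_snd:
  "distributed (std_gaussian \<Otimes>\<^sub>M std_gaussian) lborel snd std_normal_density"
proof -
  have "distr (std_gaussian \<Otimes>\<^sub>M std_gaussian) lborel snd = std_gaussian"
    using distr_cong[of "std_gaussian \<Otimes>\<^sub>M std_gaussian" _ lborel std_gaussian snd snd]
      prob_space.distr_pair_snd[OF prob_space_std_gaussian prob_space_imp_sigma_finite[OF prob_space_std_gaussian]]
    by simp
  then show ?thesis
    by (simp add: distributed_def std_gaussian_def)
qed

lemma gaussian_law_std_gaussian_pair:
  "gaussian_law (std_gaussian \<Otimes>\<^sub>M std_gaussian) (\<lambda>p. a * fst p + b * snd p) (sqrt (a\<^sup>2 + b\<^sup>2))"
proof -
  interpret P: pair_prob_space std_gaussian std_gaussian by (rule pair_prob_space_std_gaussian)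
  have fst_scaled: "distributed (std_gaussian \<Otimes>\<^sub>M std_gaussian) lborel (\<lambda>p. a * fst p) (normal_density 0 \<bar>a\<bar>)"
    if "a \<noteq> 0" using P.normal_density_affine[OF distributed_std_gaussian_pair_fst, of a 0] that by simp
  have snd_scaled: "distributed (std_gaussian \<Otimes>\<^sub>M std_gaussian) lborel (\<lambda>p. b * snd p) (normal_density 0 \<bar>b\<bar>)"
    if "b \<noteq> 0" using P.normal_density_affine[OF distributed_std_gaussian_pair_snd, of b 0] that by simp
  consider "a = 0" "b = 0" | "a \<noteq> 0" "b = 0" | "a = 0" "b \<noteq> 0" | "a \<noteq> 0" "b \<noteq> 0"
    by blast
  then show ?thesis
  proof cases
    case 1
    then show ?thesis by (intro gaussian_law_cong[OF gaussian_law_zero[OF P.prob_space_axioms]]) auto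
  next
    case 2
    then show ?thesis
      by (intro gaussian_law_cong[OF gaussian_law_normal_density[OF fst_scaled]]) auto
  next
    case 3
    then show ?thesis
      by (intro gaussian_law_cong[OF gaussian_law_normal_density[OF snd_scaled]]) auto
  next
    case 4
    have "P.indep_var borel ((\<lambda>x. a * x) \<circ> fst) borel ((\<lambda>x. b * x) \<circ> snd)"
      by (rule P.indep_var_compose[OF indep_var_fst_snd]) (auto intro: prob_space_std_gaussian)
    then have "distributed (std_gaussian \<Otimes>\<^sub>M std_gaussian) lborel (\<lambda>p. a * fst p + b * snd p)
        (normal_density (0 + 0) (sqrt (\<bar>a\<bar>\<^sup>2 + \<bar>b\<bar>\<^sup>2)))"
      using 4 by (intro P.add_indep_normal fst_scaled snd_scaled) (auto simp: comp_def)
    with 4 show ?thesis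
      by (intro gaussian_law_normal_density) (auto simp: sum_power2_gt_zero_iff)
  qed
qed

lemma gaussian_law_pair_add:
  assumes M: "prob_space M" and N: "prob_space N"
    and X: "gaussian_law M X \<sigma>" and [measurable]: "X \<in> borel_measurable M"
    and Y: "gaussian_law N Y \<tau>" and [measurable]: "Y \<in> borel_measurable N"
  shows "gaussian_law (M \<Otimes>\<^sub>M N) (\<lambda>p. X (fst p) + Y (snd p)) (sqrt (\<sigma>\<^sup>2 + \<tau>\<^sup>2))"
  unfolding gaussian_law_def
proof
  fix g :: "real \<Rightarrow> ennreal" assume [measurable]: "g \<in> borel_measurable borel"
  interpret N: sigma_finite_measure N using N by (rule prob_space_imp_sigma_finite)
  interpret G: sigma_finite_measure std_gaussian
    using prob_space_std_gaussian by (rule prob_space_imp_sigma_finite)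
  interpret MG: pair_sigma_finite M std_gaussian
    using M by (simp add: pair_sigma_finite_def prob_space_imp_sigma_finite G.sigma_finite_measure_axioms)
  have "(\<integral>\<^sup>+p. g (X (fst p) + Y (snd p)) \<partial>(M \<Otimes>\<^sub>M N)) = (\<integral>\<^sup>+u. \<integral>\<^sup>+v. g (X u + Y v) \<partial>N \<partial>M)"
    by (subst N.nn_integral_fst[symmetric]) auto
  also have "\<dots> = (\<integral>\<^sup>+u. \<integral>\<^sup>+z. g (X u + \<tau> * z) \<partial>std_gaussian \<partial>M)"
    by (intro nn_integral_cong gaussian_lawD[OF Y]) measurable
  also have "\<dots> = (\<integral>\<^sup>+z. \<integral>\<^sup>+u. g (X u + \<tau> * z) \<partial>M \<partial>std_gaussian)"
    by (rule MG.Fubini'[symmetric]) measurable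
  also have "\<dots> = (\<integral>\<^sup>+z. \<integral>\<^sup>+z'. g (\<sigma> * z' + \<tau> * z) \<partial>std_gaussian \<partial>std_gaussian)"
  proof (rule nn_integral_cong)
    fix z
    show "(\<integral>\<^sup>+u. g (X u + \<tau> * z) \<partial>M) = (\<integral>\<^sup>+z'. g (\<sigma> * z' + \<tau> * z) \<partial>std_gaussian)"
      using gaussian_lawD[OF X, of "\<lambda>t. g (t + \<tau> * z)"] by simp
  qed
  also have "\<dots> = (\<integral>\<^sup>+p. g (\<tau> * fst p + \<sigma> * snd p) \<partial>(std_gaussian \<Otimes>\<^sub>M std_gaussian))"
    by (subst G.nn_integral_fst[symmetric]) (auto simp: add.commute)
  also have "\<dots> = (\<integral>\<^sup>+z. g (sqrt (\<sigma>\<^sup>2 + \<tau>\<^sup>2) * z) \<partial>std_gaussian)"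
    using gaussian_lawD[OF gaussian_law_std_gaussian_pair[of \<tau> \<sigma>], of g] by (simp add: add.commute)
  finally show "(\<integral>\<^sup>+p. g (X (fst p) + Y (snd p)) \<partial>(M \<Otimes>\<^sub>M N))
      = (\<integral>\<^sup>+z. g (sqrt (\<sigma>\<^sup>2 + \<tau>\<^sup>2) * z) \<partial>std_gaussian)" .
qed

lemma prob_space_real_gaussian_vector: "prob_space (real_gaussian_vector d)"
  unfolding real_gaussian_vector_def by (intro prob_space_PiM prob_space_std_gaussian)

lemma sets_real_gaussian_vector [measurable_cong]:
  "sets (real_gaussian_vector d) = sets (PiM {..<d} (\<lambda>_. borel))"
  unfolding real_gaussian_vector_def by (intro sets_PiM_cong) auto

lemma gaussian_law_linear_form:
  "gaussian_law (real_gaussian_vector d) (\<lambda>u. \<Sum>k<d. c k * u k) (sqrt (\<Sum>k<d. (c k)\<^sup>2))"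
proof (induction d)
  case 0
  show ?case by (rule gaussian_law_cong[OF gaussian_law_zero[OF prob_space_real_gaussian_vector]]) auto
next
  case (Suc d)
  have "gaussian_law (std_gaussian \<Otimes>\<^sub>M real_gaussian_vector d)
      (\<lambda>p. c d * fst p + (\<Sum>k<d. c k * snd p k)) (sqrt ((c d)\<^sup>2 + (sqrt (\<Sum>k<d. (c k)\<^sup>2))\<^sup>2))"
    by (intro gaussian_law_pair_add prob_space_std_gaussian prob_space_real_gaussian_vector Suc.IH)
      (auto simp: gaussian_law_def)
  also have "(sqrt (\<Sum>k<d. (c k)\<^sup>2))\<^sup>2 = (\<Sum>k<d. (c k)\<^sup>2)"
    by (simp add: sum_nonneg)
  finally have law: "gaussian_law (std_gaussian \<Otimes>\<^sub>M real_gaussian_vector d)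
      (\<lambda>p. \<Sum>k<Suc d. c k * ((snd p)(d := fst p)) k) (sqrt (\<Sum>k<Suc d. (c k)\<^sup>2))"
    by (rule gaussian_law_cong) (auto simp: add.commute intro!: sum.cong)
  have distr: "real_gaussian_vector (Suc d)
      = distr (std_gaussian \<Otimes>\<^sub>M real_gaussian_vector d) (real_gaussian_vector (Suc d)) (\<lambda>(x, u). u (d := x))"
    unfolding real_gaussian_vector_def lessThan_Suc
    by (rule distr_pair_PiM_eq_PiM[symmetric]) (auto intro: prob_space_std_gaussian)
  have "(\<lambda>(f, y). f (d := y)) \<circ> (\<lambda>(x, u). (u, x))
      \<in> measurable (std_gaussian \<Otimes>\<^sub>M real_gaussian_vector d) (PiM (insert d {..<d}) (\<lambda>_. borel))"
    by (rule measurable_comp[OF _ measurable_add_dim]) measurable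
  then have "(\<lambda>(x, u). u (d := x)) \<in> measurable (std_gaussian \<Otimes>\<^sub>M real_gaussian_vector d) (real_gaussian_vector (Suc d))"
    by (subst measurable_cong_sets[OF refl sets_real_gaussian_vector])
      (simp add: comp_def case_prod_beta' lessThan_Suc)
  then show ?case
    using law by (subst distr) (simp add: gaussian_law_distr case_prod_beta')
qed

lemma cnorm2_nonneg [simp]: "0 \<le> cnorm2 n v"
  by (simp add: cnorm2_def sum_nonneg)

lemma power2_cnorm2: "(cnorm2 n v)\<^sup>2 = (\<Sum>k<n. (cmod (v k))\<^sup>2)"
  by (simp add: cnorm2_def sum_nonneg)

lemma borel_measurable_Complex [measurable (raw)]:
  "f \<in> borel_measurable M \<Longrightarrow> g \<in> borel_measurable M \<Longrightarrow> (\<lambda>x. Complex (f x) (g x)) \<in> borel_measurable M"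
  unfolding Complex_eq
  by (intro borel_measurable_add borel_measurable_times measurable_const
      measurable_compose[OF _ borel_measurable_of_real]) auto

lemma borel_measurable_cnj [measurable (raw)]:
  "f \<in> borel_measurable M \<Longrightarrow> (\<lambda>x. cnj (f x)) \<in> borel_measurable M"
  using borel_measurable_continuous_onI[OF continuous_on_cnj[OF continuous_on_id]]
  by (rule measurable_compose[rotated])

lemma sets_complex_gaussian_vector [measurable_cong]:
  "sets (complex_gaussian_vector d) = sets (PiM {..<d} (\<lambda>_. borel))"
  by (simp add: complex_gaussian_vector_def)

lemma prob_space_complex_gaussian_vector: "prob_space (complex_gaussian_vector d)"
  unfolding complex_gaussian_vector_def
  by (intro prob_space.prob_space_distr prob_space_pair prob_space_real_gaussian_vector) measurable

lemma borel_measurable_cinner [measurable]: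
  "(\<lambda>a. cinner d a x) \<in> borel_measurable (PiM {..<d} (\<lambda>_. borel))"
  unfolding cinner_def by measurable

lemma gaussian_law_Re_cinner:
  "gaussian_law (complex_gaussian_vector d) (\<lambda>a. Re (cinner d a x)) (cnorm2 d x / sqrt 2)"
proof -
  have "gaussian_law (real_gaussian_vector d \<Otimes>\<^sub>M real_gaussian_vector d)
      (\<lambda>p. (\<Sum>k<d. Re (x k) / sqrt 2 * fst p k) + (\<Sum>k<d. Im (x k) / sqrt 2 * snd p k))
      (sqrt ((sqrt (\<Sum>k<d. (Re (x k) / sqrt 2)\<^sup>2))\<^sup>2 + (sqrt (\<Sum>k<d. (Im (x k) / sqrt 2)\<^sup>2))\<^sup>2))"
    by (intro gaussian_law_pair_add prob_space_real_gaussian_vector gaussian_law_linear_form) measurable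
  also have "sqrt ((sqrt (\<Sum>k<d. (Re (x k) / sqrt 2)\<^sup>2))\<^sup>2 + (sqrt (\<Sum>k<d. (Im (x k) / sqrt 2)\<^sup>2))\<^sup>2)
      = cnorm2 d x / sqrt 2"
    by (simp add: cnorm2_def sum_nonneg power_divide cmod_power2 sum.distrib
        flip: sum_divide_distrib add_divide_distrib real_sqrt_divide)
  finally have law: "gaussian_law (real_gaussian_vector d \<Otimes>\<^sub>M real_gaussian_vector d)
      (\<lambda>p. (\<Sum>k<d. Re (x k) / sqrt 2 * fst p k) + (\<Sum>k<d. Im (x k) / sqrt 2 * snd p k))
      (cnorm2 d x / sqrt 2)" .
  have Re_cinner: "Re (cinner d (\<lambda>k\<in>{..<d}. Complex (u k / sqrt 2) (v k / sqrt 2)) x)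
      = (\<Sum>k<d. Re (x k) / sqrt 2 * u k) + (\<Sum>k<d. Im (x k) / sqrt 2 * v k)" for u v
    by (simp add: cinner_def sum.distrib algebra_simps)
  have "gaussian_law (real_gaussian_vector d \<Otimes>\<^sub>M real_gaussian_vector d)
      (\<lambda>(u, v). Re (cinner d (\<lambda>k\<in>{..<d}. Complex (u k / sqrt 2) (v k / sqrt 2)) x)) (cnorm2 d x / sqrt 2)"
    by (rule gaussian_law_cong[OF law]) (auto simp: Re_cinner)
  moreover have "(\<lambda>(u, v). \<lambda>k\<in>{..<d}. Complex (u k / sqrt 2) (v k / sqrt 2))
      \<in> measurable (real_gaussian_vector d \<Otimes>\<^sub>M real_gaussian_vector d) (PiM {..<d} (\<lambda>_. borel))"
    by measurable
  ultimately show ?thesis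
    unfolding complex_gaussian_vector_def by (simp add: gaussian_law_distr case_prod_beta')
qed

lemma gaussian_law_Im_cinner:
  "gaussian_law (complex_gaussian_vector d) (\<lambda>a. Im (cinner d a x)) (cnorm2 d x / sqrt 2)"
proof -
  have "cinner d a (\<lambda>k. - \<i> * x k) = - \<i> * cinner d a x" for a
    by (simp add: cinner_def sum_distrib_left algebra_simps)
  moreover have "cnorm2 d (\<lambda>k. - \<i> * x k) = cnorm2 d x"
    by (simp add: cnorm2_def norm_mult)
  ultimately show ?thesis
    by (intro gaussian_law_cong[OF gaussian_law_Re_cinner[of d "\<lambda>k. - \<i> * x k"]]) simp_all
qed

lemma nn_integral_exp_shifted_square_half_variance_le:
  fixes l c r \<rho> :: real
  assumes X: "gaussian_law M X (c / sqrt 2)" and l: "\<bar>2 * l * c\<^sup>2\<bar> \<le> 1/2" and r: "r\<^sup>2 \<le> \<rho>\<^sup>2"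
  shows "(\<integral>\<^sup>+\<omega>. ennreal (exp (2 * l * ((X \<omega> + r)\<^sup>2 - r\<^sup>2))) \<partial>M)
    \<le> ennreal (exp (l * c\<^sup>2 + 4 * l\<^sup>2 * c^4 + 8 * l\<^sup>2 * c\<^sup>2 * \<rho>\<^sup>2))"
proof -
  have \<sigma>2: "(c / sqrt 2)\<^sup>2 = c\<^sup>2 / 2"
    by (simp add: power_divide)
  have \<sigma>4: "(c / sqrt 2)^4 = c^4 / 4"
    by (simp add: power_divide power_mult[of "sqrt 2" 2 2, simplified])
  have "\<bar>2 * (2 * l) * (c / sqrt 2)\<^sup>2\<bar> \<le> 1/2"
    using l by (simp add: \<sigma>2)
  from nn_integral_exp_shifted_square_le[OF X this, of r]
  have "(\<integral>\<^sup>+\<omega>. ennreal (exp (2 * l * ((X \<omega> + r)\<^sup>2 - r\<^sup>2))) \<partial>M)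
    \<le> ennreal (exp (l * c\<^sup>2 + 4 * l\<^sup>2 * c^4 + 8 * l\<^sup>2 * c\<^sup>2 * r\<^sup>2))"
    by (simp add: \<sigma>2 \<sigma>4 algebra_simps)
  also have "\<dots> \<le> ennreal (exp (l * c\<^sup>2 + 4 * l\<^sup>2 * c^4 + 8 * l\<^sup>2 * c\<^sup>2 * \<rho>\<^sup>2))"
    using r by (intro ennreal_leI) (simp add: mult_left_mono)
  finally show ?thesis .
qed

lemma exp_add_le_mean_exp_double: "exp (u + v :: real) \<le> (exp (2 * u) + exp (2 * v)) / 2"
  using sum_squares_bound[of "exp u" "exp v"] by (simp add: exp_add exp_double)

lemma ennreal_mean:
  "0 \<le> p \<Longrightarrow> 0 \<le> q \<Longrightarrow> (ennreal p + ennreal q) / 2 = ennreal ((p + q) / 2)"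
  by (metis divide_ennreal ennreal_numeral ennreal_plus zero_less_numeral add_nonneg_nonneg)

lemma nn_integral_exp_shifted_cinner_le:
  fixes l :: real and \<beta> :: complex
  assumes l: "\<bar>2 * l * (cnorm2 d x)\<^sup>2\<bar> \<le> 1/2"
  shows "(\<integral>\<^sup>+a. ennreal (exp (l * ((cmod (cinner d a x + \<beta>))\<^sup>2 - (cmod \<beta>)\<^sup>2))) \<partial>complex_gaussian_vector d)
    \<le> ennreal (exp (l * (cnorm2 d x)\<^sup>2 + 4 * l\<^sup>2 * (cnorm2 d x)^4 + 8 * l\<^sup>2 * (cnorm2 d x)\<^sup>2 * (cmod \<beta>)\<^sup>2))"
    (is "_ \<le> ennreal ?E")
proof -
  \<comment> \<open>\<open>exp (u + v) \<le> (exp (2 u) + exp (2 v)) / 2\<close> decouples the real and imaginary parts of \<open>a\<^sup>* x + \<beta>\<close>.\<close>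
  define A where "A a = (Re (cinner d a x) + Re \<beta>)\<^sup>2 - (Re \<beta>)\<^sup>2" for a
  define B where "B a = (Im (cinner d a x) + Im \<beta>)\<^sup>2 - (Im \<beta>)\<^sup>2" for a
  have [measurable]: "A \<in> borel_measurable (complex_gaussian_vector d)"
    "B \<in> borel_measurable (complex_gaussian_vector d)"
    unfolding A_def B_def by measurable
  have "(\<integral>\<^sup>+a. ennreal (exp (l * ((cmod (cinner d a x + \<beta>))\<^sup>2 - (cmod \<beta>)\<^sup>2))) \<partial>complex_gaussian_vector d)
    \<le> (\<integral>\<^sup>+a. (ennreal (exp (2 * l * A a)) + ennreal (exp (2 * l * B a))) / 2 \<partial>complex_gaussian_vector d)"
  proof (rule nn_integral_mono)
    fix a
    have "l * ((cmod (cinner d a x + \<beta>))\<^sup>2 - (cmod \<beta>)\<^sup>2) = l * A a + l * B a"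
      unfolding A_def B_def cmod_power2 by (simp add: algebra_simps)
    then show "ennreal (exp (l * ((cmod (cinner d a x + \<beta>))\<^sup>2 - (cmod \<beta>)\<^sup>2)))
      \<le> (ennreal (exp (2 * l * A a)) + ennreal (exp (2 * l * B a))) / 2"
      using exp_add_le_mean_exp_double[of "l * A a" "l * B a"]
      by (simp add: ennreal_mean ennreal_leI mult.assoc)
  qed
  also have "\<dots> = ((\<integral>\<^sup>+a. ennreal (exp (2 * l * A a)) \<partial>complex_gaussian_vector d)
      + (\<integral>\<^sup>+a. ennreal (exp (2 * l * B a)) \<partial>complex_gaussian_vector d)) / 2"
    by (simp add: nn_integral_divide nn_integral_add)
  also have "\<dots> \<le> (ennreal ?E + ennreal ?E) / 2"
    unfolding A_def B_def
    by (intro divide_right_mono_ennreal add_mono nn_integral_exp_shifted_square_half_variance_le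
        gaussian_law_Re_cinner gaussian_law_Im_cinner l) (simp_all add: cmod_power2)
  also have "\<dots> = ennreal ?E"
    by (simp add: ennreal_mean)
  finally show ?thesis .
qed

definition measurement_excess ::
    "nat \<Rightarrow> nat \<Rightarrow> (nat \<Rightarrow> complex) \<Rightarrow> (nat \<Rightarrow> complex) \<Rightarrow> (nat \<Rightarrow> nat \<Rightarrow> complex) \<Rightarrow> real" where
  "measurement_excess d m x b a = (\<Sum>j<m. (cmod (cinner d (a j) x + b j))\<^sup>2 - (cmod (b j))\<^sup>2)"

lemma sets_gaussian_sample [measurable_cong]:
  "sets (gaussian_sample d m) = sets (PiM {..<m} (\<lambda>_. PiM {..<d} (\<lambda>_. borel)))"
  unfolding gaussian_sample_def by (intro sets_PiM_cong) (auto simp: sets_complex_gaussian_vector)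

lemma prob_space_gaussian_sample: "prob_space (gaussian_sample d m)"
  unfolding gaussian_sample_def by (intro prob_space_PiM prob_space_complex_gaussian_vector)

lemma borel_measurable_measurement_excess [measurable]:
  "measurement_excess d m x b \<in> borel_measurable (gaussian_sample d m)"
  unfolding measurement_excess_def by measurable

lemma R0_eq_measurement_excess: "R0 d m x b a = 2 * sqrt (measurement_excess d m x b a / m)"
  by (simp add: R0_def measurement_excess_def power2_cnorm2 sum_subtractf diff_divide_distrib)

lemma nn_integral_exp_measurement_excess_le:
  fixes l :: real
  assumes l: "\<bar>2 * l * (cnorm2 d x)\<^sup>2\<bar> \<le> 1/2"
  shows "(\<integral>\<^sup>+a. ennreal (exp (l * measurement_excess d m x b a)) \<partial>gaussian_sample d m)
    \<le> ennreal (exp (l * m * (cnorm2 d x)\<^sup>2 + 4 * l\<^sup>2 * m * (cnorm2 d x)^4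
         + 8 * l\<^sup>2 * (cnorm2 d x)\<^sup>2 * (cnorm2 m b)\<^sup>2))"
proof -
  interpret product_sigma_finite "\<lambda>_::nat. complex_gaussian_vector d"
    by (simp add: product_sigma_finite_def prob_space_imp_sigma_finite prob_space_complex_gaussian_vector)
  define F where "F j a = exp (l * ((cmod (cinner d a x + b j))\<^sup>2 - (cmod (b j))\<^sup>2))" for j a
  have [measurable]: "F j \<in> borel_measurable (complex_gaussian_vector d)" for j
    unfolding F_def by measurable
  have "(\<integral>\<^sup>+a. ennreal (exp (l * measurement_excess d m x b a)) \<partial>gaussian_sample d m)
      = (\<integral>\<^sup>+a. (\<Prod>j<m. ennreal (F j (a j))) \<partial>gaussian_sample d m)"
    by (intro nn_integral_cong)
      (simp add: measurement_excess_def F_def sum_distrib_left exp_sum prod_ennreal)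
  also have "\<dots> = (\<Prod>j<m. \<integral>\<^sup>+a. ennreal (F j a) \<partial>complex_gaussian_vector d)"
    unfolding gaussian_sample_def by (rule product_nn_integral_prod) auto
  also have "\<dots> \<le> (\<Prod>j<m. ennreal (exp (l * (cnorm2 d x)\<^sup>2 + 4 * l\<^sup>2 * (cnorm2 d x)^4
      + 8 * l\<^sup>2 * (cnorm2 d x)\<^sup>2 * (cmod (b j))\<^sup>2)))"
    unfolding F_def by (intro prod_mono_ennreal nn_integral_exp_shifted_cinner_le l)
  also have "\<dots> = ennreal (exp (l * m * (cnorm2 d x)\<^sup>2 + 4 * l\<^sup>2 * m * (cnorm2 d x)^4
      + 8 * l\<^sup>2 * (cnorm2 d x)\<^sup>2 * (cnorm2 m b)\<^sup>2))"
    by (simp add: power2_cnorm2[of m b] prod_ennreal exp_sum[symmetric] sum.distrib sum_distrib_left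
        algebra_simps)
  finally show ?thesis .
qed

lemma measure_measurement_excess_tail:
  fixes l T :: real
  assumes l: "\<bar>2 * l * (cnorm2 d x)\<^sup>2\<bar> \<le> 1/2"
  shows "measure (gaussian_sample d m)
      {a \<in> space (gaussian_sample d m). l * T \<le> l * measurement_excess d m x b a}
    \<le> exp (- (l * T) + l * m * (cnorm2 d x)\<^sup>2 + 4 * l\<^sup>2 * m * (cnorm2 d x)^4
         + 8 * l\<^sup>2 * (cnorm2 d x)\<^sup>2 * (cnorm2 m b)\<^sup>2)"
proof -
  interpret prob_space "gaussian_sample d m" by (rule prob_space_gaussian_sample)
  let ?S = "measurement_excess d m x b"
  have "emeasure (gaussian_sample d m) {a \<in> space (gaussian_sample d m). l * T \<le> l * ?S a}
    \<le> ennreal (exp (- 1 * (l * T)))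
      * (\<integral>\<^sup>+a. ennreal (exp (1 * (l * ?S a))) * indicator (space (gaussian_sample d m)) a \<partial>gaussian_sample d m)"
    by (rule Chernoff_ineq_nn_integral_ge) auto
  also have "\<dots> = ennreal (exp (- (l * T))) * (\<integral>\<^sup>+a. ennreal (exp (l * ?S a)) \<partial>gaussian_sample d m)"
    by (simp cong: nn_integral_cong)
  also have "\<dots> \<le> ennreal (exp (- (l * T))) * ennreal (exp (l * m * (cnorm2 d x)\<^sup>2
      + 4 * l\<^sup>2 * m * (cnorm2 d x)^4 + 8 * l\<^sup>2 * (cnorm2 d x)\<^sup>2 * (cnorm2 m b)\<^sup>2))"
    by (intro mult_left_mono nn_integral_exp_measurement_excess_le l) simp
  finally show ?thesis
    by (simp add: emeasure_eq_measure ennreal_mult'[symmetric] exp_add[symmetric] algebra_simps)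
qed

lemma measure_measurement_excess_tail_le:
  fixes C0 l T :: real
  defines "K \<equiv> 4 + 8 * C0\<^sup>2"
  assumes B: "(cnorm2 m b)\<^sup>2 \<le> C0\<^sup>2 * m * (cnorm2 d x)\<^sup>2"
    and l: "\<bar>l\<bar> * (cnorm2 d x)\<^sup>2 = 1 / (2 * K)"
  shows "measure (gaussian_sample d m)
      {a \<in> space (gaussian_sample d m). l * T \<le> l * measurement_excess d m x b a}
    \<le> exp (- (l * T) + l * m * (cnorm2 d x)\<^sup>2 + m / (4 * K))"
proof -
  define n where "n = (cnorm2 d x)\<^sup>2"
  have K: "K \<ge> 4" by (simp add: K_def)
  have "\<bar>2 * l * (cnorm2 d x)\<^sup>2\<bar> = 2 * (\<bar>l\<bar> * (cnorm2 d x)\<^sup>2)"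
    by (simp add: abs_mult)
  also have "\<dots> \<le> 1/2"
    using K by (simp add: l)
  finally have small: "\<bar>2 * l * (cnorm2 d x)\<^sup>2\<bar> \<le> 1/2" .
  have ln: "l\<^sup>2 * n\<^sup>2 = (1 / (2 * K))\<^sup>2"
    using arg_cong[OF l, of power2] by (simp add: n_def power_mult_distrib)
  have "4 * l\<^sup>2 * m * (cnorm2 d x)^4 = 4 * m * (l\<^sup>2 * n\<^sup>2)"
    by (simp add: n_def flip: power_mult)
  moreover have "8 * l\<^sup>2 * (cnorm2 d x)\<^sup>2 * (cnorm2 m b)\<^sup>2 \<le> 8 * l\<^sup>2 * n * (C0\<^sup>2 * m * n)"
    using B by (simp add: n_def mult_left_mono)
  moreover have "8 * l\<^sup>2 * n * (C0\<^sup>2 * m * n) = 8 * C0\<^sup>2 * m * (l\<^sup>2 * n\<^sup>2)"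
    by (simp add: power2_eq_square)
  moreover have "4 * m * (l\<^sup>2 * n\<^sup>2) + 8 * C0\<^sup>2 * m * (l\<^sup>2 * n\<^sup>2) = K * m * (1 / (2 * K))\<^sup>2"
    by (simp add: ln K_def algebra_simps)
  moreover have "K * m * (1 / (2 * K))\<^sup>2 = m / (4 * K)"
    using K by (simp add: power2_eq_square)
  ultimately have "4 * l\<^sup>2 * m * (cnorm2 d x)^4 + 8 * l\<^sup>2 * (cnorm2 d x)\<^sup>2 * (cnorm2 m b)\<^sup>2 \<le> m / (4 * K)"
    by linarith
  then have "exp (- (l * T) + l * m * (cnorm2 d x)\<^sup>2 + 4 * l\<^sup>2 * m * (cnorm2 d x)^4
      + 8 * l\<^sup>2 * (cnorm2 d x)\<^sup>2 * (cnorm2 m b)\<^sup>2) \<le> exp (- (l * T) + l * m * (cnorm2 d x)\<^sup>2 + m / (4 * K))"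
    by simp
  with measure_measurement_excess_tail[OF small] show ?thesis
    by (rule order_trans)
qed

lemma measurement_excess_tails:
  fixes C0 :: real
  defines "K \<equiv> 4 + 8 * C0\<^sup>2"
  assumes x: "cnorm2 d x > 0" and b: "cnorm2 m b \<le> C0 * sqrt m * cnorm2 d x"
  shows "measure (gaussian_sample d m)
      {a \<in> space (gaussian_sample d m). 9 * real m * (cnorm2 d x)\<^sup>2 / 4 \<le> measurement_excess d m x b a}
    \<le> exp (- real m / (8 * K))"
    and "measure (gaussian_sample d m)
      {a \<in> space (gaussian_sample d m). measurement_excess d m x b a \<le> real m * (cnorm2 d x)\<^sup>2 / 4}
    \<le> exp (- real m / (8 * K))"
proof -
  define n where "n = (cnorm2 d x)\<^sup>2"
  define l where "l = 1 / (2 * K * n)"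
  have n: "n > 0" using x by (simp add: n_def)
  have K: "K \<ge> 4" by (simp add: K_def)
  have l: "l > 0" "\<bar>l\<bar> * n = 1 / (2 * K)" "\<bar>- l\<bar> * n = 1 / (2 * K)"
    using n K by (simp_all add: l_def)
  have "(cnorm2 m b)\<^sup>2 \<le> (C0 * sqrt m * cnorm2 d x)\<^sup>2"
    using b by (intro power_mono) auto
  then have B: "(cnorm2 m b)\<^sup>2 \<le> C0\<^sup>2 * m * (cnorm2 d x)\<^sup>2"
    by (simp add: power_mult_distrib)
  note tail = measure_measurement_excess_tail_le[OF B, folded K_def n_def]
  have "{a \<in> space (gaussian_sample d m). 9 * real m * n / 4 \<le> measurement_excess d m x b a}
    = {a \<in> space (gaussian_sample d m). l * (9 * real m * n / 4) \<le> l * measurement_excess d m x b a}"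
    using l by (simp only: mult_le_cancel_left_pos)
  also have "measure (gaussian_sample d m) \<dots> \<le> exp (- (l * (9 * real m * n / 4)) + l * m * n + m / (4 * K))"
    by (rule tail) (rule l)
  also have "\<dots> \<le> exp (- real m / (8 * K))"
    using n K by (simp add: l_def divide_right_mono field_simps)
  finally show "measure (gaussian_sample d m)
      {a \<in> space (gaussian_sample d m). 9 * real m * (cnorm2 d x)\<^sup>2 / 4 \<le> measurement_excess d m x b a}
    \<le> exp (- real m / (8 * K))"
    by (simp only: n_def)
  have "{a \<in> space (gaussian_sample d m). measurement_excess d m x b a \<le> real m * n / 4}
    = {a \<in> space (gaussian_sample d m). - l * (real m * n / 4) \<le> - l * measurement_excess d m x b a}"
    using l by (simp only: mult_le_cancel_left_neg neg_less_0_iff_less)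
  also have "measure (gaussian_sample d m) \<dots> \<le> exp (- (- l * (real m * n / 4)) + - l * m * n + m / (4 * K))"
    by (rule tail) (rule l)
  also have "\<dots> = exp (- real m / (8 * K))"
    using n K by (simp add: l_def field_simps)
  finally show "measure (gaussian_sample d m)
      {a \<in> space (gaussian_sample d m). measurement_excess d m x b a \<le> real m * (cnorm2 d x)\<^sup>2 / 4}
    \<le> exp (- real m / (8 * K))"
    by (simp only: n_def)
qed

lemma measurement_excess_eq_0: "cnorm2 d x = 0 \<Longrightarrow> measurement_excess d m x b a = 0"
  by (simp add: cnorm2_def sum_nonneg_eq_0_iff measurement_excess_def cinner_def)

lemma R0_bounds_of_measurement_excess:
  assumes m: "m > 0"
    and lower: "real m * (cnorm2 d x)\<^sup>2 / 4 \<le> measurement_excess d m x b a"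
    and upper: "measurement_excess d m x b a \<le> 9 * real m * (cnorm2 d x)\<^sup>2 / 4"
  shows "R0 d m x b a / 3 \<le> cnorm2 d x \<and> cnorm2 d x \<le> R0 d m x b a"
proof -
  have "cnorm2 d x / 2 \<le> sqrt (measurement_excess d m x b a / m)"
    by (rule real_le_rsqrt) (use lower m in \<open>simp add: field_simps\<close>)
  moreover have "sqrt (measurement_excess d m x b a / m) \<le> 3 * cnorm2 d x / 2"
    by (rule real_le_lsqrt) (use upper m in \<open>simp_all add: field_simps\<close>)
  ultimately show ?thesis
    by (simp add: R0_eq_measurement_excess)
qed

lemma measure_R0_bounds_ge:
  fixes C0 :: real
  assumes m: "m > 0" and b: "cnorm2 m b \<le> C0 * sqrt m * cnorm2 d x"
  shows "measure (gaussian_sample d m)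
      {a \<in> space (gaussian_sample d m). R0 d m x b a / 3 \<le> cnorm2 d x \<and> cnorm2 d x \<le> R0 d m x b a}
    \<ge> 1 - 2 * exp (- real m / (8 * (4 + 8 * C0\<^sup>2)))"
proof -
  interpret prob_space "gaussian_sample d m" by (rule prob_space_gaussian_sample)
  define good where "good = {a \<in> space (gaussian_sample d m).
    R0 d m x b a / 3 \<le> cnorm2 d x \<and> cnorm2 d x \<le> R0 d m x b a}"
  have good: "good \<in> events"
    unfolding good_def R0_eq_measurement_excess by measurable
  show ?thesis
  proof (cases "cnorm2 d x = 0")
    case True
    then have "good = space (gaussian_sample d m)"
      by (simp add: good_def R0_eq_measurement_excess measurement_excess_eq_0)
    then have "prob good = 1"
      by (simp add: prob_space)
    then show ?thesis
      by (simp add: good_def)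
  next
    case False
    then have x: "cnorm2 d x > 0"
      using cnorm2_nonneg by (simp add: order_less_le)
    define U where "U = {a \<in> space (gaussian_sample d m).
      9 * real m * (cnorm2 d x)\<^sup>2 / 4 \<le> measurement_excess d m x b a}"
    define L where "L = {a \<in> space (gaussian_sample d m).
      measurement_excess d m x b a \<le> real m * (cnorm2 d x)\<^sup>2 / 4}"
    have events: "U \<in> events" "L \<in> events"
      unfolding U_def L_def by measurable
    have "space (gaussian_sample d m) - (U \<union> L) \<subseteq> good"
      using R0_bounds_of_measurement_excess[OF m] by (auto simp: U_def L_def good_def)
    then have "prob (space (gaussian_sample d m) - (U \<union> L)) \<le> prob good"
      by (intro finite_measure_mono good)
    moreover have "prob (U \<union> L) \<le> prob U + prob L"
      using events by (rule measure_Un_le)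
    moreover have "prob U + prob L \<le> 2 * exp (- real m / (8 * (4 + 8 * C0\<^sup>2)))"
      using measurement_excess_tails[OF x b] by (simp add: U_def L_def)
    ultimately show ?thesis
      using events by (simp add: prob_compl good_def)
  qed
qed

theorem lemma1:
  fixes C0 :: real
  assumes "C0 > 0"
  shows "\<exists>c>0. \<forall>(d::nat) (m::nat) (x::nat \<Rightarrow> complex) (b::nat \<Rightarrow> complex).
           m > 0 \<longrightarrow> cnorm2 m b \<le> C0 * sqrt (real m) * cnorm2 d x \<longrightarrow>
           measure (gaussian_sample d m)
             {a \<in> space (gaussian_sample d m).
                R0 d m x b a / 3 \<le> cnorm2 d x \<and> cnorm2 d x \<le> R0 d m x b a}
           \<ge> 1 - 4 * exp (- c * real m)"
proof -
  define c where "c = 1 / (8 * (4 + 8 * C0\<^sup>2))"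
  have "c > 0"
    by (simp add: c_def add_pos_nonneg)
  moreover have "1 - 4 * exp (- c * real m) \<le> measure (gaussian_sample d m)
      {a \<in> space (gaussian_sample d m). R0 d m x b a / 3 \<le> cnorm2 d x \<and> cnorm2 d x \<le> R0 d m x b a}"
    if "m > 0" "cnorm2 m b \<le> C0 * sqrt (real m) * cnorm2 d x" for d m x b
  proof -
    have "1 - 4 * exp (- c * real m) \<le> 1 - 2 * exp (- real m / (8 * (4 + 8 * C0\<^sup>2)))"
      by (simp add: c_def)
    also have "\<dots> \<le> measure (gaussian_sample d m)
      {a \<in> space (gaussian_sample d m). R0 d m x b a / 3 \<le> cnorm2 d x \<and> cnorm2 d x \<le> R0 d m x b a}"
      by (rule measure_R0_bounds_ge[OF that])
    finally show ?thesis .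
  qed
  ultimately show ?thesis
    by blast
qed

end
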